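(* Let $\varphi:\mathbb{D}\to\mathbb{D}$ be holomorphic and $m\in\mathrm{Hol}(\mathbb{D})$. If the weighted composition operator $W_{m,\varphi}$, $W_{m,\varphi}f=m\,(f\circ\varphi)$, is similar to a linear isometry of $\mathrm{Hol}(\mathbb{D})$, then $W_{m,\varphi}$ is invertible.
   Context: $\mathbb{D}$ is the open unit disc and $\mathrm{Hol}(\mathbb{D})$ the Fréchet space of holomorphic functions on $\mathbb{D}$ with seminorms $\|f\|_{\infty,1-1/p}=\sup_{|z|\le 1-1/p}|f(z)|$, $p\in\mathbb{N}$, and metric $d(f,g)=\sum_{p\ge1}2^{-p}\min(1,\|f-g\|_{\infty,1-1/p})$. A linear isometry of $\mathrm{Hol}(\mathbb{D})$ is a linear operator that is an isometry for $d$. Two operators $T,V$ in the space $\mathcal{L}(\mathrm{Hol}(\mathbb{D}))$ of continuous linear operators are similar if there is an invertible $U\in\mathcal{L}(\mathrm{Hol}(\mathbb{D}))$ with $U^{-1}TU=V$. *)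

theory Defs
  imports "HOL-Analysis.Analysis"
begin

text \<open>Hol(D) is represented by canonical representatives: functions holomorphic on
  the open unit disc and equal to 0 outside of it.\<close>

definition Hol :: "(complex \<Rightarrow> complex) set" where
  "Hol = {f. f holomorphic_on ball 0 1 \<and> (\<forall>z. z \<notin> ball 0 1 \<longrightarrow> f z = 0)}"

definition supnorm :: "nat \<Rightarrow> (complex \<Rightarrow> complex) \<Rightarrow> real" where
  "supnorm p f = (SUP z\<in>cball 0 (1 - 1 / real p). norm (f z))"

text \<open>d(f,g) = sum over p >= 1 of 2^-p min(1, ||f-g||_p); index shifted by one.\<close>
definition hol_dist :: "(complex \<Rightarrow> complex) \<Rightarrow> (complex \<Rightarrow> complex) \<Rightarrow> real" where
  "hol_dist f g = (\<Sum>k. (1/2) ^ Suc k * min 1 (supnorm (Suc k) (\<lambda>z. f z - g z)))"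

definition hol_linear :: "((complex \<Rightarrow> complex) \<Rightarrow> (complex \<Rightarrow> complex)) \<Rightarrow> bool" where
  "hol_linear T \<longleftrightarrow> (\<forall>f\<in>Hol. T f \<in> Hol) \<and>
     (\<forall>f\<in>Hol. \<forall>g\<in>Hol. T (\<lambda>z. f z + g z) = (\<lambda>z. T f z + T g z)) \<and>
     (\<forall>c. \<forall>f\<in>Hol. T (\<lambda>z. c * f z) = (\<lambda>z. c * T f z))"

definition hol_op :: "((complex \<Rightarrow> complex) \<Rightarrow> (complex \<Rightarrow> complex)) \<Rightarrow> bool" where
  "hol_op T \<longleftrightarrow> hol_linear T \<and>
     (\<forall>f\<in>Hol. \<forall>e>0. \<exists>\<delta>>0. \<forall>g\<in>Hol. hol_dist f g < \<delta> \<longrightarrow> hol_dist (T f) (T g) < e)"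

definition hol_isometry :: "((complex \<Rightarrow> complex) \<Rightarrow> (complex \<Rightarrow> complex)) \<Rightarrow> bool" where
  "hol_isometry V \<longleftrightarrow> hol_linear V \<and>
     (\<forall>f\<in>Hol. \<forall>g\<in>Hol. hol_dist (V f) (V g) = hol_dist f g)"

definition hol_invertible :: "((complex \<Rightarrow> complex) \<Rightarrow> (complex \<Rightarrow> complex)) \<Rightarrow> bool" where
  "hol_invertible T \<longleftrightarrow> hol_op T \<and>
     (\<exists>S. hol_op S \<and> (\<forall>f\<in>Hol. S (T f) = f) \<and> (\<forall>f\<in>Hol. T (S f) = f))"

definition hol_similar :: "((complex \<Rightarrow> complex) \<Rightarrow> (complex \<Rightarrow> complex)) \<Rightarrow>
    ((complex \<Rightarrow> complex) \<Rightarrow> (complex \<Rightarrow> complex)) \<Rightarrow> bool" where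
  "hol_similar T V \<longleftrightarrow> (\<exists>U Uinv. hol_op U \<and> hol_op Uinv \<and>
     (\<forall>f\<in>Hol. Uinv (U f) = f) \<and> (\<forall>f\<in>Hol. U (Uinv f) = f) \<and>
     (\<forall>f\<in>Hol. Uinv (T (U f)) = V f))"

definition wco :: "(complex \<Rightarrow> complex) \<Rightarrow> (complex \<Rightarrow> complex) \<Rightarrow>
    (complex \<Rightarrow> complex) \<Rightarrow> (complex \<Rightarrow> complex)" where
  "wco m \<phi> f = (\<lambda>z. if z \<in> ball 0 1 then m z * f (\<phi> z) else 0)"

end

(* A linear isometry V of Hol(D) preserves every seminorm, because the distances d(t f, 0),
   t > 0, determine the increasing sequence of seminorms of f. Hence the orbits of V are
   bounded in each seminorm and, by Montel's theorem, have convergent subsequences; this makes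
   every orbit recurrent and yields a solution of V h = g as a limit, so V is onto. Its inverse
   is again a linear isometry, so if T = U V U^-1 then U V^-1 U^-1 is a continuous inverse
   of T. Nothing about T = W_{m,phi} is used except that it maps Hol(D) into itself. *)

theory Submission
  imports Defs "HOL-Complex_Analysis.Complex_Analysis"
begin

definition capped_sum :: "(nat \<Rightarrow> real) \<Rightarrow> real" where
  "capped_sum a = (\<Sum>k. (1/2) ^ Suc k * min 1 (a k))"

lemma hol_dist_eq_capped_sum:
  "hol_dist f g = capped_sum (\<lambda>k. supnorm (Suc k) (\<lambda>z. f z - g z))"
  by (simp add: hol_dist_def capped_sum_def)

lemma capped_term_bounds:
  assumes "0 \<le> s"
  shows "0 \<le> (1/2::real) ^ Suc k * min 1 s" "(1/2::real) ^ Suc k * min 1 s \<le> (1/2) ^ Suc k"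
  using assms by (auto intro: mult_left_le)

lemma summable_half_power_Suc: "summable (\<lambda>k. (1/2::real) ^ Suc k)"
  using summable_mult[OF summable_geometric[of "1/2::real"], of "1/2"] by simp

lemma capped_sum_summable:
  assumes "\<And>k. 0 \<le> a k"
  shows "summable (\<lambda>k. (1/2::real) ^ Suc k * min 1 (a k))"
  by (rule summable_comparison_test[OF _ summable_half_power_Suc])
    (use assms capped_term_bounds in auto)

lemma capped_sum_nonneg:
  assumes "\<And>k. 0 \<le> a k"
  shows "0 \<le> capped_sum a"
  unfolding capped_sum_def
  by (intro suminf_nonneg capped_sum_summable capped_term_bounds assms)

lemma capped_sum_eq_0_iff:
  assumes "\<And>k. 0 \<le> a k"
  shows "capped_sum a = 0 \<longleftrightarrow> (\<forall>k. a k = 0)"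
proof -
  have "capped_sum a = 0 \<longleftrightarrow> (\<forall>k. (1/2::real) ^ Suc k * min 1 (a k) = 0)"
    unfolding capped_sum_def
    by (intro suminf_eq_zero_iff capped_sum_summable capped_term_bounds assms)
  also have "\<dots> \<longleftrightarrow> (\<forall>k. a k = 0)"
    using assms by (auto simp: min_def)
  finally show ?thesis .
qed

lemma capped_sum_subadditive:
  assumes "\<And>k. 0 \<le> a k" "\<And>k. 0 \<le> b k" "\<And>k. 0 \<le> c k" "\<And>k. a k \<le> b k + c k"
  shows "capped_sum a \<le> capped_sum b + capped_sum c"
proof -
  have "min 1 (a k) \<le> min 1 (b k) + min 1 (c k)" for k
    using assms[of k] by linarith
  then have "capped_sum a \<le> (\<Sum>k. (1/2::real) ^ Suc k * min 1 (b k) + (1/2) ^ Suc k * min 1 (c k))"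
    unfolding capped_sum_def
    by (intro suminf_le summable_add capped_sum_summable assms)
      (simp add: distrib_left[symmetric] mult_left_mono)
  also have "\<dots> = capped_sum b + capped_sum c"
    unfolding capped_sum_def by (intro suminf_add[symmetric] capped_sum_summable assms)
  finally show ?thesis .
qed

lemma capped_sum_tendsto_0:
  assumes "\<And>n k. 0 \<le> a n k" "\<And>k. (\<lambda>n. a n k) \<longlonglongrightarrow> 0"
  shows "(\<lambda>n. capped_sum (a n)) \<longlonglongrightarrow> 0"
proof -
  have "(\<lambda>n. (1/2::real) ^ Suc k * min 1 (a n k)) \<longlonglongrightarrow> (1/2) ^ Suc k * min 1 0" for k
    by (intro tendsto_intros assms)
  moreover have "\<forall>\<^sub>F (k, n) in at_top \<times>\<^sub>F sequentially.
      norm ((1/2::real) ^ Suc k * min 1 (a n k)) \<le> (1/2) ^ Suc k"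
    using capped_term_bounds assms(1) by (intro always_eventually) auto
  ultimately show ?thesis
    unfolding capped_sum_def using tannerys_theorem[OF _ _ summable_half_power_Suc] by fastforce
qed

text \<open>The terms before p agree; scaling by 1 / b p caps every term of the b-sum from p on,
  while the p-th term of the a-sum stays strictly below its cap.\<close>
lemma capped_sum_scaled_first_difference:
  fixes a b :: "nat \<Rightarrow> real"
  assumes "\<And>k. 0 \<le> a k" "\<And>k. 0 \<le> b k" "mono b" "\<And>j. j < p \<Longrightarrow> a j = b j" "a p < b p"
  shows "capped_sum (\<lambda>k. inverse (b p) * a k) < capped_sum (\<lambda>k. inverse (b p) * b k)"
proof -
  have bp: "b p > 0" using assms(1,5) by (metis le_less_trans)
  let ?A = "\<lambda>k. (1/2::real) ^ Suc k * min 1 (inverse (b p) * a k)"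
  let ?B = "\<lambda>k. (1/2::real) ^ Suc k * min 1 (inverse (b p) * b k)"
  have summable: "summable ?A" "summable ?B"
    using bp by (auto intro!: capped_sum_summable mult_nonneg_nonneg assms(1,2) simp del: power_Suc)
  have "0 < (\<Sum>k. ?B k - ?A k)"
  proof (rule suminf_pos2)
    show "summable (\<lambda>k. ?B k - ?A k)" using summable by (rule summable_diff[rotated])
    show "0 \<le> ?B k - ?A k" for k
    proof (cases "k < p")
      case False
      then have "b p \<le> b k" using assms(3) by (simp add: monoD)
      then show ?thesis using bp by (simp add: min_def field_simps)
    qed (simp add: assms(4))
    show "0 < ?B p - ?A p" using assms(5) bp by (simp add: min_def field_simps)
  qed
  then show ?thesis
    unfolding capped_sum_def using suminf_diff[OF summable(2,1)] by simp
qed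

lemma capped_sum_scaled_eq_imp_eq:
  fixes a b :: "nat \<Rightarrow> real"
  assumes "\<And>k. 0 \<le> a k" "\<And>k. 0 \<le> b k" "mono a" "mono b"
    and "\<And>t. t > 0 \<Longrightarrow> capped_sum (\<lambda>k. t * a k) = capped_sum (\<lambda>k. t * b k)"
  shows "a = b"
proof
  fix p show "a p = b p"
  proof (induction p rule: less_induct)
    case (less p)
    show ?case
    proof (rule ccontr)
      assume "a p \<noteq> b p"
      then consider "a p < b p" | "b p < a p" by linarith
      then show False
      proof cases
        case 1
        with less have "capped_sum (\<lambda>k. inverse (b p) * a k) < capped_sum (\<lambda>k. inverse (b p) * b k)"
          by (intro capped_sum_scaled_first_difference assms)
        moreover have "b p > 0" using 1 assms(1)[of p] by linarith
        ultimately show False using assms(5) by auto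
      next
        case 2
        with less have "capped_sum (\<lambda>k. inverse (a p) * b k) < capped_sum (\<lambda>k. inverse (a p) * a k)"
          by (intro capped_sum_scaled_first_difference assms) auto
        moreover have "a p > 0" using 2 assms(2)[of p] by linarith
        ultimately show False using assms(5) by fastforce
      qed
    qed
  qed
qed

lemma Hol_holomorphic: "f \<in> Hol \<Longrightarrow> f holomorphic_on ball 0 1"
  and Hol_outside: "f \<in> Hol \<Longrightarrow> z \<notin> ball 0 1 \<Longrightarrow> f z = 0"
  by (auto simp: Hol_def)

lemma Hol_continuous: "f \<in> Hol \<Longrightarrow> continuous_on (ball 0 1) f"
  by (simp add: Hol_holomorphic holomorphic_on_imp_continuous_on)

lemma Hol_zero: "(\<lambda>z. 0) \<in> Hol"
  by (simp add: Hol_def)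

lemma Hol_add: "f \<in> Hol \<Longrightarrow> g \<in> Hol \<Longrightarrow> (\<lambda>z. f z + g z) \<in> Hol"
  and Hol_mult_left: "f \<in> Hol \<Longrightarrow> (\<lambda>z. c * f z) \<in> Hol"
  unfolding Hol_def by (auto intro: holomorphic_intros)

lemma radius_nonneg: "0 \<le> 1 - 1 / real (Suc k)"
  by (simp add: field_simps)

lemma cball_radius_subset_ball: "cball (0::complex) (1 - 1 / real (Suc k)) \<subseteq> ball 0 1"
  by (simp add: cball_subset_ball_iff)

lemma exists_radius_ge_norm:
  assumes "norm (z::complex) < 1"
  obtains k where "norm z \<le> 1 - 1 / real (Suc k)"
proof -
  obtain k where "inverse (real (Suc k)) < 1 - norm z"
    using reals_Archimedean[of "1 - norm z"] assms by auto
  then show ?thesis by (intro that[of k]) (simp add: field_simps)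
qed

lemma compact_subset_cball_radius:
  assumes "compact K" "K \<subseteq> ball (0::complex) 1"
  obtains k where "K \<subseteq> cball 0 (1 - 1 / real (Suc k))"
proof (cases "K = {}")
  case False
  obtain s where s: "s \<in> K" "\<And>z. z \<in> K \<Longrightarrow> norm z \<le> norm s"
    using continuous_attains_sup[OF assms(1) False, of norm] by (auto intro: continuous_intros)
  obtain k where "norm s \<le> 1 - 1 / real (Suc k)"
    using s(1) assms(2) by (meson exists_radius_ge_norm mem_ball_0 subsetD)
  then show ?thesis using s(2) by (metis that mem_cball_0 order_trans subsetI)
qed simp

lemma supnorm_bdd_above:
  fixes f :: "complex \<Rightarrow> complex"
  assumes "continuous_on (ball 0 1) f"
  shows "bdd_above ((\<lambda>z. norm (f z)) ` cball 0 (1 - 1 / real (Suc k)))"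
proof -
  have "continuous_on (cball 0 (1 - 1 / real (Suc k))) f"
    by (rule continuous_on_subset[OF assms cball_radius_subset_ball])
  then have "compact ((\<lambda>z. norm (f z)) ` cball 0 (1 - 1 / real (Suc k)))"
    by (rule compact_continuous_image[OF continuous_on_norm compact_cball])
  then show ?thesis by (intro bounded_imp_bdd_above compact_imp_bounded)
qed

lemma supnorm_upper:
  assumes "continuous_on (ball 0 1) f" "norm z \<le> 1 - 1 / real (Suc k)"
  shows "norm (f z) \<le> supnorm (Suc k) f"
  unfolding supnorm_def using supnorm_bdd_above[OF assms(1), of k] assms(2)
  by (intro cSUP_upper) auto

lemma supnorm_least:
  assumes "\<And>z. norm z \<le> 1 - 1 / real (Suc k) \<Longrightarrow> norm (f z) \<le> M"
  shows "supnorm (Suc k) f \<le> M"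
  unfolding supnorm_def using assms radius_nonneg[of k] by (intro cSUP_least) auto

lemma supnorm_nonneg:
  assumes "continuous_on (ball 0 1) f"
  shows "0 \<le> supnorm (Suc k) f"
  using supnorm_upper[OF assms, of 0 k] by (simp add: order_trans[OF norm_ge_zero])

lemma supnorm_mono:
  assumes "continuous_on (ball 0 1) f"
  shows "mono (\<lambda>k. supnorm (Suc k) f)"
proof (intro monoI supnorm_least)
  fix k l :: nat and z :: complex
  assume "k \<le> l" "norm z \<le> 1 - 1 / real (Suc k)"
  moreover have "1 - 1 / real (Suc k) \<le> 1 - 1 / real (Suc l)"
    using \<open>k \<le> l\<close> by (simp add: field_simps)
  ultimately show "norm (f z) \<le> supnorm (Suc l) f"
    by (intro supnorm_upper[OF assms]) auto
qed

lemma supnorm_mult_left: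
  assumes "continuous_on (ball 0 1) f"
  shows "supnorm (Suc k) (\<lambda>z. c * f z) = norm c * supnorm (Suc k) f"
proof (cases "c = 0")
  case True
  then show ?thesis by (simp add: supnorm_def)
next
  case False
  have "norm c * norm (f z) \<le> norm c * supnorm (Suc k) f" if "norm z \<le> 1 - 1 / real (Suc k)" for z
    using supnorm_upper[OF assms that] by (simp add: mult_left_mono)
  then have "supnorm (Suc k) (\<lambda>z. c * f z) \<le> norm c * supnorm (Suc k) f"
    by (intro supnorm_least) (simp add: norm_mult)
  moreover have "supnorm (Suc k) f \<le> supnorm (Suc k) (\<lambda>z. c * f z) / norm c"
  proof (intro supnorm_least)
    fix z :: complex assume "norm z \<le> 1 - 1 / real (Suc k)"
    then have "norm (c * f z) \<le> supnorm (Suc k) (\<lambda>z. c * f z)"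
      using assms by (intro supnorm_upper continuous_on_mult_left)
    then show "norm (f z) \<le> supnorm (Suc k) (\<lambda>z. c * f z) / norm c"
      using False by (simp add: field_simps norm_mult)
  qed
  ultimately show ?thesis using False by (simp add: field_simps)
qed

lemma supnorm_diff_triangle:
  assumes "continuous_on (ball 0 1) f" "continuous_on (ball 0 1) g" "continuous_on (ball 0 1) h"
  shows "supnorm (Suc k) (\<lambda>z. f z - h z)
    \<le> supnorm (Suc k) (\<lambda>z. f z - g z) + supnorm (Suc k) (\<lambda>z. g z - h z)"
proof (rule supnorm_least)
  fix z :: complex assume z: "norm z \<le> 1 - 1 / real (Suc k)"
  have "norm (f z - h z) \<le> norm (f z - g z) + norm (g z - h z)"
    using norm_triangle_ineq[of "f z - g z" "g z - h z"] by simp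
  also have "\<dots> \<le> supnorm (Suc k) (\<lambda>z. f z - g z) + supnorm (Suc k) (\<lambda>z. g z - h z)"
    using assms by (intro add_mono supnorm_upper[OF _ z] continuous_on_diff)
  finally show "norm (f z - h z) \<le> \<dots>" .
qed

lemma supnorm_diff_commute: "supnorm p (\<lambda>z. f z - g z) = supnorm p (\<lambda>z. g z - f z)"
  unfolding supnorm_def by (simp add: norm_minus_commute)

lemma hol_dist_nonneg:
  assumes "continuous_on (ball 0 1) f" "continuous_on (ball 0 1) g"
  shows "0 \<le> hol_dist f g"
  unfolding hol_dist_eq_capped_sum
  using assms by (intro capped_sum_nonneg supnorm_nonneg continuous_on_diff)

lemma hol_dist_commute: "hol_dist f g = hol_dist g f"
  unfolding hol_dist_def by (subst supnorm_diff_commute) simp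

lemma hol_dist_triangle:
  assumes "continuous_on (ball 0 1) f" "continuous_on (ball 0 1) g" "continuous_on (ball 0 1) h"
  shows "hol_dist f h \<le> hol_dist f g + hol_dist g h"
  unfolding hol_dist_eq_capped_sum using assms
  by (intro capped_sum_subadditive supnorm_nonneg supnorm_diff_triangle continuous_on_diff)

lemma hol_dist_eq_0_iff:
  assumes "f \<in> Hol" "g \<in> Hol"
  shows "hol_dist f g = 0 \<longleftrightarrow> f = g"
proof
  assume "hol_dist f g = 0"
  then have sup0: "supnorm (Suc k) (\<lambda>z. f z - g z) = 0" for k
    unfolding hol_dist_eq_capped_sum using assms
    by (subst (asm) capped_sum_eq_0_iff) (auto intro: supnorm_nonneg continuous_on_diff Hol_continuous)
  show "f = g"
  proof
    fix z show "f z = g z"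
    proof (cases "z \<in> ball 0 1")
      case True
      then obtain k where "norm z \<le> 1 - 1 / real (Suc k)"
        using exists_radius_ge_norm by auto
      then have "norm (f z - g z) \<le> 0"
        using supnorm_upper[OF continuous_on_diff[OF Hol_continuous[OF assms(1)]
            Hol_continuous[OF assms(2)]]] sup0 by simp
      then show ?thesis by simp
    qed (simp add: Hol_outside assms)
  qed
qed (simp add: hol_dist_def supnorm_def)

lemma supnorm_tendsto_0_if_uniform_limit:
  assumes "uniform_limit (cball 0 (1 - 1 / real (Suc k))) y h sequentially"
    and "\<And>n. continuous_on (ball 0 1) (y n)" "continuous_on (ball 0 1) h"
  shows "(\<lambda>n. supnorm (Suc k) (\<lambda>z. y n z - h z)) \<longlonglongrightarrow> 0"
proof (rule LIMSEQ_I)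
  fix e :: real assume "0 < e"
  then have "\<forall>\<^sub>F n in sequentially. \<forall>z\<in>cball 0 (1 - 1 / real (Suc k)). dist (y n z) (h z) < e/2"
    using assms(1) unfolding uniform_limit_iff by (meson half_gt_zero)
  then obtain N where N: "\<And>n z. n \<ge> N \<Longrightarrow> z \<in> cball 0 (1 - 1 / real (Suc k))
      \<Longrightarrow> dist (y n z) (h z) < e/2"
    unfolding eventually_sequentially by blast
  have "norm (supnorm (Suc k) (\<lambda>z. y n z - h z)) < e" if "n \<ge> N" for n
  proof -
    have "supnorm (Suc k) (\<lambda>z. y n z - h z) \<le> e/2"
      using N[OF that] by (intro supnorm_least) (auto simp: dist_norm intro: less_imp_le)
    moreover have "0 \<le> supnorm (Suc k) (\<lambda>z. y n z - h z)"
      using assms(2,3) by (intro supnorm_nonneg continuous_on_diff)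
    ultimately show ?thesis using \<open>0 < e\<close> by simp
  qed
  then show "\<exists>N. \<forall>n\<ge>N. norm (supnorm (Suc k) (\<lambda>z. y n z - h z) - 0) < e" by auto
qed

theorem Hol_Montel:
  fixes y :: "nat \<Rightarrow> complex \<Rightarrow> complex"
  assumes "\<And>n. y n \<in> Hol" and "\<And>n k. supnorm (Suc k) (y n) \<le> B k"
  obtains r h where "strict_mono r" "h \<in> Hol" "(\<lambda>n. hol_dist (y (r n)) h) \<longlonglongrightarrow> 0"
proof -
  define H where "H = {f. f holomorphic_on ball 0 1 \<and> (\<forall>k. supnorm (Suc k) f \<le> B k)}"
  obtain g r where g: "g holomorphic_on ball 0 1" and r: "strict_mono (r :: nat \<Rightarrow> nat)"
    and ul: "\<And>K. \<lbrakk>compact K; K \<subseteq> ball 0 1\<rbrakk> \<Longrightarrow> uniform_limit K (y \<circ> r) g sequentially"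
  proof (rule Montel[of "ball 0 1" H y])
    show "range y \<subseteq> H" using assms by (auto simp: H_def Hol_holomorphic)
    fix K :: "complex set" assume "compact K" "K \<subseteq> ball 0 1"
    then obtain k where k: "K \<subseteq> cball 0 (1 - 1 / real (Suc k))"
      by (rule compact_subset_cball_radius)
    show "\<exists>B. \<forall>h\<in>H. \<forall>z\<in>K. norm (h z) \<le> B"
    proof (intro exI[of _ "B k"] ballI)
      fix f z assume "f \<in> H" "z \<in> K"
      then have z: "norm z \<le> 1 - 1 / real (Suc k)" and f: "f holomorphic_on ball 0 1"
        and "supnorm (Suc k) f \<le> B k"
        using k by (auto simp: H_def)
      then show "norm (f z) \<le> B k"
        using supnorm_upper[OF holomorphic_on_imp_continuous_on[OF f] z] by linarith
    qed
  qed (auto simp: H_def)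
  define h where "h z = (if z \<in> ball 0 1 then g z else 0)" for z
  have h: "h \<in> Hol"
    unfolding Hol_def using holomorphic_transform[OF g, of h] by (auto simp: h_def)
  have "uniform_limit (cball 0 (1 - 1 / real (Suc k))) (\<lambda>n. y (r n)) h sequentially" for k
  proof -
    have "uniform_limit (cball 0 (1 - 1 / real (Suc k))) (y \<circ> r) g sequentially"
      by (rule ul[OF compact_cball cball_radius_subset_ball])
    moreover have "h z = g z" if "z \<in> cball 0 (1 - 1 / real (Suc k))" for z
      using that cball_radius_subset_ball[of k] by (auto simp: h_def)
    ultimately show ?thesis
      using uniform_limit_cong'[of "cball 0 (1 - 1 / real (Suc k))" "y \<circ> r" "\<lambda>n. y (r n)" g h]
      by simp
  qed
  then have "(\<lambda>n. hol_dist (y (r n)) h) \<longlonglongrightarrow> 0"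
    unfolding hol_dist_eq_capped_sum
    by (intro capped_sum_tendsto_0 supnorm_nonneg supnorm_tendsto_0_if_uniform_limit
        continuous_on_diff Hol_continuous assms(1) h)
  with r h show ?thesis by (rule that)
qed

lemma hol_linear_Hol: "hol_linear A \<Longrightarrow> f \<in> Hol \<Longrightarrow> A f \<in> Hol"
  and hol_linear_add:
    "hol_linear A \<Longrightarrow> f \<in> Hol \<Longrightarrow> g \<in> Hol \<Longrightarrow> A (\<lambda>z. f z + g z) = (\<lambda>z. A f z + A g z)"
  and hol_linear_mult_left: "hol_linear A \<Longrightarrow> f \<in> Hol \<Longrightarrow> A (\<lambda>z. c * f z) = (\<lambda>z. c * A f z)"
  by (simp_all add: hol_linear_def)

lemma hol_linear_zero: "hol_linear A \<Longrightarrow> A (\<lambda>z. 0) = (\<lambda>z. 0)"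
  using hol_linear_mult_left[OF _ Hol_zero, of A 0] by simp

lemma hol_linear_compose: "hol_linear A \<Longrightarrow> hol_linear B \<Longrightarrow> hol_linear (\<lambda>f. A (B f))"
  by (simp add: hol_linear_def)

lemma hol_isometry_linear: "hol_isometry V \<Longrightarrow> hol_linear V"
  and hol_isometry_dist:
    "hol_isometry V \<Longrightarrow> f \<in> Hol \<Longrightarrow> g \<in> Hol \<Longrightarrow> hol_dist (V f) (V g) = hol_dist f g"
  by (simp_all add: hol_isometry_def)

lemma hol_isometry_Hol: "hol_isometry V \<Longrightarrow> f \<in> Hol \<Longrightarrow> V f \<in> Hol"
  by (simp add: hol_isometry_linear hol_linear_Hol)

lemma hol_isometry_compose:
  "hol_isometry A \<Longrightarrow> hol_isometry B \<Longrightarrow> hol_isometry (\<lambda>f. A (B f))"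
  by (simp add: hol_isometry_def hol_linear_compose hol_linear_Hol)

lemma hol_isometry_funpow: "hol_isometry V \<Longrightarrow> hol_isometry (V ^^ n)"
proof (induction n)
  case 0
  then show ?case by (simp add: hol_isometry_def hol_linear_def id_def)
next
  case (Suc n)
  then show ?case using hol_isometry_compose[of V "V ^^ n"] by (simp add: o_def)
qed

lemma hol_isometry_inj:
  "hol_isometry V \<Longrightarrow> f \<in> Hol \<Longrightarrow> g \<in> Hol \<Longrightarrow> V f = V g \<Longrightarrow> f = g"
  by (metis hol_isometry_dist hol_isometry_Hol hol_dist_eq_0_iff)

lemma hol_isometry_supnorm:
  assumes "hol_isometry V" "f \<in> Hol"
  shows "supnorm (Suc k) (V f) = supnorm (Suc k) f"
proof -
  have Vf: "V f \<in> Hol" using assms by (rule hol_isometry_Hol)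
  have dist_scaled: "hol_dist (\<lambda>z. complex_of_real t * h z) (\<lambda>z. 0)
      = capped_sum (\<lambda>k. t * supnorm (Suc k) h)" if "h \<in> Hol" "t > 0" for h t
    using that by (simp add: hol_dist_eq_capped_sum supnorm_mult_left Hol_continuous)
  have "(\<lambda>k. supnorm (Suc k) (V f)) = (\<lambda>k. supnorm (Suc k) f)"
  proof (rule capped_sum_scaled_eq_imp_eq)
    fix t :: real assume "t > 0"
    have "hol_dist (\<lambda>z. complex_of_real t * V f z) (\<lambda>z. 0)
        = hol_dist (V (\<lambda>z. complex_of_real t * f z)) (V (\<lambda>z. 0))"
      using assms by (simp add: hol_linear_mult_left hol_linear_zero hol_isometry_linear)
    also have "\<dots> = hol_dist (\<lambda>z. complex_of_real t * f z) (\<lambda>z. 0)"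
      using assms by (intro hol_isometry_dist Hol_mult_left Hol_zero)
    finally show "capped_sum (\<lambda>k. t * supnorm (Suc k) (V f)) = capped_sum (\<lambda>k. t * supnorm (Suc k) f)"
      using dist_scaled[OF Vf \<open>t > 0\<close>] dist_scaled[OF assms(2) \<open>t > 0\<close>] by simp
  qed (use Vf assms(2) in \<open>auto intro: supnorm_nonneg supnorm_mono Hol_continuous\<close>)
  then show ?thesis by (rule fun_cong)
qed

lemma hol_isometry_orbit_recurrent:
  assumes V: "hol_isometry V" and g: "g \<in> Hol" and "e > 0"
  obtains l where "l > 0" "hol_dist g ((V ^^ l) g) < e"
proof -
  have orbit: "(V ^^ n) g \<in> Hol" for n
    using hol_isometry_Hol[OF hol_isometry_funpow[OF V] g] .
  obtain r h where r: "strict_mono r" and h: "h \<in> Hol"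
    and lim: "(\<lambda>n. hol_dist ((V ^^ r n) g) h) \<longlonglongrightarrow> 0"
    by (rule Hol_Montel[of "\<lambda>n. (V ^^ n) g" "\<lambda>k. supnorm (Suc k) g", OF orbit])
      (simp add: hol_isometry_supnorm[OF hol_isometry_funpow[OF V] g])
  have "\<forall>\<^sub>F n in sequentially. hol_dist ((V ^^ r n) g) h < e/2"
    by (rule order_tendstoD(2)[OF lim]) (simp add: \<open>e > 0\<close>)
  then obtain N where N: "\<And>n. n \<ge> N \<Longrightarrow> hol_dist ((V ^^ r n) g) h < e/2"
    unfolding eventually_sequentially by blast
  define l where "l = r (Suc N) - r N"
  have "r N < r (Suc N)" using r by (simp add: strict_mono_def)
  then have l: "l > 0" "r (Suc N) = r N + l" by (auto simp: l_def)
  have "hol_dist g ((V ^^ l) g) = hol_dist ((V ^^ r N) g) ((V ^^ r N) ((V ^^ l) g))"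
    using hol_isometry_dist[OF hol_isometry_funpow[OF V] g orbit] by simp
  also have "\<dots> = hol_dist ((V ^^ r N) g) ((V ^^ r (Suc N)) g)"
    by (simp add: l(2) funpow_add)
  also have "\<dots> \<le> hol_dist ((V ^^ r N) g) h + hol_dist h ((V ^^ r (Suc N)) g)"
    using orbit h by (intro hol_dist_triangle Hol_continuous)
  also have "\<dots> < e"
    using N[of N] N[of "Suc N"] by (simp add: hol_dist_commute[of h])
  finally show ?thesis using l(1) that by blast
qed

text \<open>By recurrence g is a limit of points V (z j) on its orbit; the z j lie on the orbit too, so
  Montel's theorem gives a subsequence converging to some h, and then V h = g.\<close>
lemma hol_isometry_surj:
  assumes V: "hol_isometry V" and g: "g \<in> Hol"
  obtains h where "h \<in> Hol" "V h = g"
proof -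
  have orbit: "(V ^^ n) g \<in> Hol" for n
    using hol_isometry_Hol[OF hol_isometry_funpow[OF V] g] .
  have "\<exists>l>0. hol_dist g ((V ^^ l) g) < inverse (real (Suc j))" for j
    by (rule hol_isometry_orbit_recurrent[OF V g, of "inverse (real (Suc j))"]) auto
  then obtain L where L: "\<And>j. L j > 0" "\<And>j. hol_dist g ((V ^^ L j) g) < inverse (real (Suc j))"
    by metis
  define z where "z j = (V ^^ (L j - 1)) g" for j
  have z: "z j \<in> Hol" for j by (simp add: z_def orbit)
  have Vz: "V (z j) = (V ^^ L j) g" for j
    using L(1)[of j] by (cases "L j") (simp_all add: z_def)
  obtain r h where r: "strict_mono r" and h: "h \<in> Hol"
    and lim: "(\<lambda>n. hol_dist (z (r n)) h) \<longlonglongrightarrow> 0"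
    by (rule Hol_Montel[of z "\<lambda>k. supnorm (Suc k) g", OF z])
      (simp add: z_def hol_isometry_supnorm[OF hol_isometry_funpow[OF V] g])
  have Vh: "V h \<in> Hol" using V h by (rule hol_isometry_Hol)
  have bound: "hol_dist (V h) g \<le> hol_dist (z (r n)) h + inverse (real (Suc (r n)))" for n
  proof -
    have "hol_dist (V h) g \<le> hol_dist (V h) (V (z (r n))) + hol_dist (V (z (r n))) g"
      using Vh z g by (intro hol_dist_triangle Hol_continuous) (simp_all add: Vz orbit)
    also have "\<dots> \<le> hol_dist (z (r n)) h + inverse (real (Suc (r n)))"
      using hol_isometry_dist[OF V h z] L(2)[of "r n"] by (simp add: Vz hol_dist_commute)
    finally show ?thesis .
  qed
  have "(\<lambda>n. hol_dist (z (r n)) h + inverse (real (Suc (r n)))) \<longlonglongrightarrow> 0 + 0"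
    using LIMSEQ_subseq_LIMSEQ[OF LIMSEQ_inverse_real_of_nat r] by (intro tendsto_add lim) (simp add: o_def)
  then have "hol_dist (V h) g \<le> 0"
    using bound by (intro LIMSEQ_le_const[of _ 0]) auto
  moreover have "0 \<le> hol_dist (V h) g"
    using Vh g by (intro hol_dist_nonneg Hol_continuous)
  ultimately have "V h = g"
    using hol_dist_eq_0_iff[OF Vh g] by simp
  with h show ?thesis by (rule that)
qed

lemma hol_isometry_inverse:
  assumes V: "hol_isometry V"
  obtains W where "hol_isometry W"
    and "\<And>f. f \<in> Hol \<Longrightarrow> W (V f) = f" "\<And>f. f \<in> Hol \<Longrightarrow> V (W f) = f"
proof
  define W where "W = inv_into Hol V"
  have inj: "inj_on V Hol"
    using hol_isometry_inj[OF V] by (rule inj_onI)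
  have image: "V ` Hol = Hol"
  proof
    show "V ` Hol \<subseteq> Hol" using hol_isometry_Hol[OF V] by blast
    show "Hol \<subseteq> V ` Hol"
    proof
      fix g assume "g \<in> Hol"
      then obtain h where "h \<in> Hol" "V h = g" by (rule hol_isometry_surj[OF V])
      then show "g \<in> V ` Hol" by blast
    qed
  qed
  show WV: "W (V f) = f" if "f \<in> Hol" for f
    unfolding W_def using inj that by (rule inv_into_f_f)
  show VW: "V (W f) = f" if "f \<in> Hol" for f
    unfolding W_def using that image by (simp add: f_inv_into_f)
  have W_Hol: "W f \<in> Hol" if "f \<in> Hol" for f
    unfolding W_def using that image by (metis inv_into_into)
  show "hol_isometry W"
    unfolding hol_isometry_def hol_linear_def
  proof (intro conjI ballI allI)
    fix f g assume f: "f \<in> Hol" and g: "g \<in> Hol"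
    show "W f \<in> Hol" using f by (rule W_Hol)
    have "V (\<lambda>z. W f z + W g z) = (\<lambda>z. f z + g z)"
      using f g W_Hol by (simp add: hol_linear_add hol_isometry_linear[OF V] VW)
    then show "W (\<lambda>z. f z + g z) = (\<lambda>z. W f z + W g z)"
      using WV[OF Hol_add[OF W_Hol[OF f] W_Hol[OF g]]] by simp
    have "hol_dist (W f) (W g) = hol_dist (V (W f)) (V (W g))"
      using f g W_Hol by (simp add: hol_isometry_dist[OF V])
    then show "hol_dist (W f) (W g) = hol_dist f g" using f g by (simp add: VW)
  next
    fix c f assume f: "f \<in> Hol"
    have "V (\<lambda>z. c * W f z) = (\<lambda>z. c * f z)"
      using f W_Hol by (simp add: hol_linear_mult_left hol_isometry_linear[OF V] VW)
    then show "W (\<lambda>z. c * f z) = (\<lambda>z. c * W f z)"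
      using WV[OF Hol_mult_left[OF W_Hol[OF f], of c]] by simp
  qed
qed

lemma hol_op_linear: "hol_op A \<Longrightarrow> hol_linear A"
  by (simp add: hol_op_def)

lemma hol_op_Hol: "hol_op A \<Longrightarrow> f \<in> Hol \<Longrightarrow> A f \<in> Hol"
  by (simp add: hol_op_linear hol_linear_Hol)

lemma hol_op_compose:
  assumes A: "hol_op A" and B: "hol_op B"
  shows "hol_op (\<lambda>f. A (B f))"
  unfolding hol_op_def
proof (intro conjI ballI allI impI)
  show "hol_linear (\<lambda>f. A (B f))"
    by (rule hol_linear_compose[OF hol_op_linear[OF A] hol_op_linear[OF B]])
  fix f e assume f: "f \<in> Hol" and "(e::real) > 0"
  then obtain d1 where "d1 > 0"
    and d1: "\<And>g. g \<in> Hol \<Longrightarrow> hol_dist (B f) g < d1 \<Longrightarrow> hol_dist (A (B f)) (A g) < e"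
    using A hol_op_Hol[OF B f] unfolding hol_op_def by blast
  then obtain d2 where "d2 > 0"
    and d2: "\<And>g. g \<in> Hol \<Longrightarrow> hol_dist f g < d2 \<Longrightarrow> hol_dist (B f) (B g) < d1"
    using B f unfolding hol_op_def by blast
  show "\<exists>d>0. \<forall>g\<in>Hol. hol_dist f g < d \<longrightarrow> hol_dist (A (B f)) (A (B g)) < e"
    using \<open>d2 > 0\<close> d1[OF hol_op_Hol[OF B] d2] by blast
qed

lemma hol_op_cong:
  assumes "hol_op A" "\<And>f. f \<in> Hol \<Longrightarrow> B f = A f"
  shows "hol_op B"
  using assms unfolding hol_op_def hol_linear_def by (simp add: Hol_add Hol_mult_left)

lemma hol_isometry_imp_hol_op: "hol_isometry V \<Longrightarrow> hol_op V"
  unfolding hol_op_def by (simp add: hol_isometry_linear hol_isometry_dist) blast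

lemma hol_invertible_if_similar_isometry:
  assumes T: "\<And>f. f \<in> Hol \<Longrightarrow> T f \<in> Hol" and V: "hol_isometry V" and "hol_similar T V"
  shows "hol_invertible T"
proof -
  obtain U U' where U: "hol_op U" and U': "hol_op U'"
    and U'U: "\<And>f. f \<in> Hol \<Longrightarrow> U' (U f) = f" and UU': "\<And>f. f \<in> Hol \<Longrightarrow> U (U' f) = f"
    and similar: "\<And>f. f \<in> Hol \<Longrightarrow> U' (T (U f)) = V f"
    using \<open>hol_similar T V\<close> unfolding hol_similar_def by blast
  obtain W where W: "hol_isometry W"
    and WV: "\<And>f. f \<in> Hol \<Longrightarrow> W (V f) = f" and VW: "\<And>f. f \<in> Hol \<Longrightarrow> V (W f) = f"
    using hol_isometry_inverse[OF V] by blast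
  have T_eq: "T f = U (V (U' f))" if "f \<in> Hol" for f
  proof -
    have "T f = U (U' (T (U (U' f))))"
      using UU'[OF T[OF that]] UU'[OF that] by simp
    also have "\<dots> = U (V (U' f))"
      using similar[OF hol_op_Hol[OF U' that]] by simp
    finally show ?thesis .
  qed
  have "hol_op T"
    using hol_op_compose[OF U hol_op_compose[OF hol_isometry_imp_hol_op[OF V] U']] T_eq
    by (rule hol_op_cong)
  moreover have "hol_op (\<lambda>f. U (W (U' f)))"
    by (rule hol_op_compose[OF U hol_op_compose[OF hol_isometry_imp_hol_op[OF W] U']])
  moreover have "U (W (U' (T f))) = f" if "f \<in> Hol" for f
    using that by (simp add: T_eq U'U WV UU' hol_op_Hol[OF U'] hol_isometry_Hol[OF V])
  moreover have "T (U (W (U' f))) = f" if "f \<in> Hol" for f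
    using that by (simp add: T_eq U'U VW UU' hol_op_Hol[OF U] hol_op_Hol[OF U'] hol_isometry_Hol[OF W])
  ultimately show ?thesis unfolding hol_invertible_def by blast
qed

lemma wco_Hol:
  assumes "\<phi> holomorphic_on ball 0 1" "\<phi> ` ball 0 1 \<subseteq> ball 0 1" "m holomorphic_on ball 0 1"
    and "f \<in> Hol"
  shows "wco m \<phi> f \<in> Hol"
proof -
  have "(\<lambda>z. m z * f (\<phi> z)) holomorphic_on ball 0 1"
    using holomorphic_on_compose_gen[OF assms(1) Hol_holomorphic[OF assms(4)] assms(2)] assms(3)
    by (simp add: o_def holomorphic_intros)
  then have "wco m \<phi> f holomorphic_on ball 0 1"
    by (rule holomorphic_transform) (simp add: wco_def)
  then show ?thesis unfolding Hol_def by (simp add: wco_def)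
qed

theorem lemma3p3:
  fixes m \<phi> :: "complex \<Rightarrow> complex"
  assumes "\<phi> holomorphic_on ball 0 1"
    and "\<phi> ` ball 0 1 \<subseteq> ball 0 1"
    and "m holomorphic_on ball 0 1"
    and "\<exists>V. hol_isometry V \<and> hol_similar (wco m \<phi>) V"
  shows "hol_invertible (wco m \<phi>)"
  using assms(4) hol_invertible_if_similar_isometry wco_Hol[OF assms(1-3)] by blast

end
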